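(* Fix a problem instance $x$. Suppose the domain $\mathcal{A}\times\mathcal{W}$ is partitioned into $N$ connected sets $R_{x,1},\dots,R_{x,N}$ and that for each $i\in[N]$ there is a constant $c_{x,i}$ with $f_x(\alpha,w)=c_{x,i}$ for all $(\alpha,w)\in R_{x,i}$. Then there are $O(N)$ points $\alpha_{\min}=\alpha_0<\alpha_1<\dots<\alpha_t=\alpha_{\max}$, $t=O(N)$, such that the dual utility function $u^*_x(\alpha)=\sup_{w\in\mathcal{W}}f_x(\alpha,w)$ is constant on each open interval $(\alpha_j,\alpha_{j+1})$. In particular $u^*_x$ has $O(N)$ discontinuity points and is piecewise constant with $O(N)$ pieces.
   Context: Setting: $\mathcal{X}$ is a set of problem instances, $\mathcal{A}=[\alpha_{\min},\alpha_{\max}]\subset\mathbb{R}$ is the hyperparameter domain, $\mathcal{W}=[w_{\min},w_{\max}]^d\subset\mathbb{R}^d$ is the parameter domain, and $f:\mathcal{X}\times\mathcal{A}\times\mathcal{W}\to[0,H]$. For fixed $x$, the parameter-dependent dual function is $f_x(\alpha,w):=f(x,\alpha,w)$ and the dual utility function is $u^*_x(\alpha):=\sup_{w\in\mathcal{W}}f_x(\alpha,w)$. *)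

theory Defs
  imports "HOL-Analysis.Analysis"
begin

text \<open>Parameter domain W = [wmin,wmax]^d, with R^d embedded into nat => real
  (product topology) as the functions vanishing on coordinates >= d.
  This encoding lets the dimension d be quantified inside the statement,
  so that the constant hidden in O(N) is uniform in d.\<close>
definition param_domain :: "nat \<Rightarrow> real \<Rightarrow> real \<Rightarrow> (nat \<Rightarrow> real) set" where
  "param_domain d wmin wmax =
     {w. (\<forall>i<d. wmin \<le> w i \<and> w i \<le> wmax) \<and> (\<forall>i\<ge>d. w i = 0)}"

definition dual_utility :: "(real \<Rightarrow> 'w \<Rightarrow> real) \<Rightarrow> 'w set \<Rightarrow> real \<Rightarrow> real" where
  "dual_utility fx W \<alpha> = (SUP w\<in>W. fx \<alpha> w)"

end

theory Submission
  imports Defs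
begin

text \<open>Projecting each connected region R i onto the hyperparameter axis gives an interval P i.
  For fixed \<alpha>, the values f(\<alpha>, w) with w \<in> W are exactly the constants c i of the
  regions with \<alpha> \<in> P i, so u*(\<alpha>) depends only on which intervals P i contain \<alpha>.
  This set of indices can change only at the at most 2N endpoints of the P i; together with
  \<alpha>min and \<alpha>max these endpoints cut the hyperparameter domain into at most 2N + 1 open
  intervals on which u* is constant.\<close>

lemma card_UN_doubletons_le: "card (\<Union>i<N. {f i, g i}) \<le> 2 * N"
proof -
  have "card (\<Union>i<N. {f i, g i}) \<le> (\<Sum>i<N. card {f i, g i})"
    by (rule card_UN_le) simp
  also have "\<dots> \<le> (\<Sum>i<N. 2)"
    by (rule sum_mono) (simp add: card_insert_le_m1)
  finally show ?thesis by simp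
qed

lemma finite_set_breakpoints:
  fixes E :: "'a::linorder set"
  assumes "finite E" "lo \<in> E" "hi \<in> E" "E \<subseteq> {lo..hi}"
  obtains t a where "t < card E" "a 0 = lo" "a t = hi" "\<forall>j<t. a j < a (Suc j)"
    "\<forall>j<t. {a j<..<a (Suc j)} \<subseteq> {lo..hi} - E"
proof -
  define xs where "xs = sorted_list_of_set E"
  define t where "t = length xs - 1"
  have set_xs: "set xs = E" and sorted_xs: "sorted_wrt (<) xs" and len_xs: "length xs = card E"
    using assms(1) by (simp_all add: xs_def)
  then have "sorted xs" by (simp add: strict_sorted_iff)
  have "E \<noteq> {}" using assms(2) by blast
  then have t_less: "t < length xs" using assms(1) len_xs by (simp add: t_def card_gt_0_iff)
  have nth_le: "xs ! i \<le> xs ! k" if "i \<le> k" "k \<le> t" for i k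
    using sorted_nth_mono[OF \<open>sorted xs\<close> that(1)] that(2) t_less by simp
  have index: "\<exists>k\<le>t. e = xs ! k" if e: "e \<in> E" for e
  proof -
    obtain k where "k < length xs" "e = xs ! k"
      using e set_xs in_set_conv_nth[of e xs] by blast
    then show ?thesis unfolding t_def by (intro exI[of _ k]) simp
  qed
  have in_E: "xs ! k \<in> E" if "k \<le> t" for k
    using that t_less set_xs nth_mem by fastforce
  show thesis
  proof (rule that[of t "(!) xs"])
    show "t < card E" using t_less len_xs by simp
    show "xs ! 0 = lo"
      using index[OF assms(2)] nth_le[of 0] in_E[of 0] assms(4) by fastforce
    show "xs ! t = hi"
      using index[OF assms(3)] nth_le[of _ t] in_E[of t] assms(4) by fastforce
    show "\<forall>j<t. xs ! j < xs ! Suc j"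
      using sorted_xs t_less by (simp add: t_def sorted_wrt_iff_nth_less)
    show "\<forall>j<t. {xs ! j<..<xs ! Suc j} \<subseteq> {lo..hi} - E"
    proof (intro allI impI subsetI)
      fix j x assume j: "j < t" and x: "x \<in> {xs ! j<..<xs ! Suc j}"
      have "x \<notin> E"
      proof
        assume "x \<in> E"
        then obtain k where "k \<le> t" "x = xs ! k" using index by blast
        then show False
          using x j nth_le[of k j] nth_le[of "Suc j" k] by (cases "k \<le> j") auto
      qed
      moreover have "x \<in> {lo..hi}"
        using x j in_E[of j] in_E[of "Suc j"] assms(4) by fastforce
      ultimately show "x \<in> {lo..hi} - E" by blast
    qed
  qed
qed

lemma is_interval_mem_iff_bounds_outside:
  fixes S :: "real set"
  assumes S: "is_interval S" "bdd_below S" "bdd_above S"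
    and bounds: "Inf S \<notin> {p<..<q}" "Sup S \<notin> {p<..<q}"
    and xy: "x \<in> {p<..<q}" "y \<in> {p<..<q}"
  shows "x \<in> S \<longleftrightarrow> y \<in> S"
proof -
  have False if "u \<in> S" "v \<notin> S" "u \<in> {p<..<q}" "v \<in> {p<..<q}" for u v
  proof (cases "u < v")
    case True
    have "z \<le> v" if "z \<in> S" for z
      using S(1) \<open>u \<in> S\<close> \<open>v \<notin> S\<close> \<open>u < v\<close> that unfolding is_interval_1
      by (meson less_imp_le not_le)
    then have "Sup S \<le> v" using \<open>u \<in> S\<close> cSup_least[of S v] by blast
    moreover have "u \<le> Sup S" using cSup_upper[OF \<open>u \<in> S\<close> S(3)] .
    ultimately show False using bounds(2) that(3,4) by auto
  next
    case False
    then have "v < u" using that by (metis linorder_neqE_linordered_idom)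
    have "v \<le> z" if "z \<in> S" for z
      using S(1) \<open>u \<in> S\<close> \<open>v \<notin> S\<close> \<open>v < u\<close> that unfolding is_interval_1
      by (meson less_imp_le not_le)
    then have "v \<le> Inf S" using \<open>u \<in> S\<close> cInf_greatest[of S v] by blast
    moreover have "Inf S \<le> u" using cInf_lower[OF \<open>u \<in> S\<close> S(2)] .
    ultimately show False using bounds(1) that(3,4) by auto
  qed
  then show ?thesis using xy by blast
qed

lemma image_section_of_cover:
  assumes cover: "(\<Union>i\<in>I. R i) = A \<times> W"
    and const: "\<forall>i\<in>I. \<forall>(\<alpha>, w)\<in>R i. f \<alpha> w = c i"
    and "\<alpha> \<in> A"
  shows "f \<alpha> ` W = c ` {i\<in>I. \<alpha> \<in> fst ` R i}"
proof (intro equalityI subsetI)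
  fix y assume "y \<in> f \<alpha> ` W"
  then obtain w where "w \<in> W" "y = f \<alpha> w" by blast
  then obtain i where "i \<in> I" "(\<alpha>, w) \<in> R i" using cover \<open>\<alpha> \<in> A\<close> by blast
  moreover from this have "y = c i" using const \<open>y = f \<alpha> w\<close> by fast
  ultimately show "y \<in> c ` {i\<in>I. \<alpha> \<in> fst ` R i}" by force
next
  fix y assume "y \<in> c ` {i\<in>I. \<alpha> \<in> fst ` R i}"
  then obtain i w where "i \<in> I" "(\<alpha>, w) \<in> R i" "y = c i" by force
  moreover from this have "w \<in> W" using cover by blast
  moreover from calculation have "f \<alpha> w = c i" using const by fast
  ultimately show "y \<in> f \<alpha> ` W" by (metis image_eqI)
qed

lemma dual_utility_piecewise_constant:
  fixes R :: "nat \<Rightarrow> (real \<times> 'w::topological_space) set"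
  assumes "lo \<le> hi"
    and cover: "(\<Union>i<N. R i) = {lo..hi} \<times> W"
    and connected: "\<forall>i<N. connected (R i)"
    and const: "\<forall>i<N. \<forall>(\<alpha>, w)\<in>R i. fx \<alpha> w = c i"
  obtains t a where "t \<le> 2 * N + 1" "a 0 = lo" "a t = hi" "\<forall>j<t. a j < a (Suc j)"
    "\<forall>j<t. \<exists>v. \<forall>\<alpha>\<in>{a j<..<a (Suc j)}. dual_utility fx W \<alpha> = v"
proof -
  define P where "P i = fst ` R i" for i
  have P_sub: "P i \<subseteq> {lo..hi}" if "i < N" for i
    using cover that unfolding P_def by fastforce
  have P_interval: "is_interval (P i)" if "i < N" for i
  proof -
    have "connected (P i)" unfolding P_def
      by (rule connected_continuous_image) (use connected that in \<open>auto intro: continuous_intros\<close>)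
    then show ?thesis by (simp add: is_interval_connected_1)
  qed
  define E where "E = {lo, hi} \<union> (\<Union>i<N. {Inf (P i), Sup (P i)}) \<inter> {lo..hi}"
  have "card E \<le> card ({lo, hi} \<union> (\<Union>i<N. {Inf (P i), Sup (P i)}))"
    unfolding E_def by (rule card_mono) auto
  also have "\<dots> \<le> card {lo, hi} + card (\<Union>i<N. {Inf (P i), Sup (P i)})"
    by (rule card_Un_le)
  also have "\<dots> \<le> 2 + 2 * N"
    using card_UN_doubletons_le by (intro add_mono) (simp_all add: card_insert_le_m1)
  finally have card_E: "card E \<le> 2 + 2 * N" .
  have E: "finite E" "lo \<in> E" "hi \<in> E" "E \<subseteq> {lo..hi}"
    unfolding E_def using \<open>lo \<le> hi\<close> by auto
  obtain t a where "t < card E" and a: "a 0 = lo" "a t = hi" "\<forall>j<t. a j < a (Suc j)"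
    and gaps: "\<forall>j<t. {a j<..<a (Suc j)} \<subseteq> {lo..hi} - E"
    using finite_set_breakpoints[OF E] .
  have utility_eq: "dual_utility fx W \<alpha> = Sup (c ` {i\<in>{..<N}. \<alpha> \<in> P i})"
    if "\<alpha> \<in> {lo..hi}" for \<alpha>
  proof -
    have "fx \<alpha> ` W = c ` {i\<in>{..<N}. \<alpha> \<in> fst ` R i}"
      by (rule image_section_of_cover[OF cover _ that]) (use const in blast)
    then show ?thesis by (simp add: dual_utility_def P_def)
  qed
  show thesis
  proof (rule that[OF _ a])
    show "t \<le> 2 * N + 1" using \<open>t < card E\<close> card_E by linarith
    show "\<forall>j<t. \<exists>v. \<forall>\<alpha>\<in>{a j<..<a (Suc j)}. dual_utility fx W \<alpha> = v"
    proof (intro allI impI)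
      fix j assume "j < t"
      define m where "m = (a j + a (Suc j)) / 2"
      have m: "m \<in> {a j<..<a (Suc j)}" using a(3) \<open>j < t\<close> by (simp add: m_def)
      have gap: "x \<in> {lo..hi}" "x \<notin> E" if "x \<in> {a j<..<a (Suc j)}" for x
        using gaps \<open>j < t\<close> that by blast+
      have "dual_utility fx W \<alpha> = dual_utility fx W m" if \<alpha>: "\<alpha> \<in> {a j<..<a (Suc j)}" for \<alpha>
      proof -
        have "\<alpha> \<in> P i \<longleftrightarrow> m \<in> P i" if "i < N" for i
        proof (rule is_interval_mem_iff_bounds_outside[OF P_interval[OF that] _ _ _ _ \<alpha> m])
          show "bdd_below (P i)" by (rule bdd_below_mono[OF bdd_below_Icc P_sub[OF that]])
          show "bdd_above (P i)" by (rule bdd_above_mono[OF bdd_above_Icc P_sub[OF that]])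
          have "{Inf (P i), Sup (P i)} \<inter> {lo..hi} \<subseteq> E" unfolding E_def using that by blast
          then show "Inf (P i) \<notin> {a j<..<a (Suc j)}" "Sup (P i) \<notin> {a j<..<a (Suc j)}"
            using gap by blast+
        qed
        then have "{i\<in>{..<N}. \<alpha> \<in> P i} = {i\<in>{..<N}. m \<in> P i}" by blast
        then show ?thesis using utility_eq gap(1)[OF \<alpha>] gap(1)[OF m] by simp
      qed
      then show "\<exists>v. \<forall>\<alpha>\<in>{a j<..<a (Suc j)}. dual_utility fx W \<alpha> = v" by blast
    qed
  qed
qed

lemma param_domain_nonempty:
  assumes "wmin \<le> wmax"
  shows "param_domain d wmin wmax \<noteq> {}"
proof -
  have "(\<lambda>i. if i < d then wmin else 0) \<in> param_domain d wmin wmax"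
    using assms by (simp add: param_domain_def)
  then show ?thesis by blast
qed

theorem mainTheorem4:
  "\<exists>C::real. C > 0 \<and>
    (\<forall>(d::nat) (amin::real) amax (wmin::real) wmax (H::real)
       (fx :: real \<Rightarrow> (nat \<Rightarrow> real) \<Rightarrow> real) (N::nat)
       (R :: nat \<Rightarrow> (real \<times> (nat \<Rightarrow> real)) set) (c :: nat \<Rightarrow> real).
       amin \<le> amax \<longrightarrow> wmin \<le> wmax \<longrightarrow>
       (\<forall>\<alpha>\<in>{amin..amax}. \<forall>w\<in>param_domain d wmin wmax. 0 \<le> fx \<alpha> w \<and> fx \<alpha> w \<le> H) \<longrightarrow>
       (\<Union>i<N. R i) = {amin..amax} \<times> param_domain d wmin wmax \<longrightarrow>
       (\<forall>i<N. \<forall>j<N. i \<noteq> j \<longrightarrow> R i \<inter> R j = {}) \<longrightarrow>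
       (\<forall>i<N. R i \<noteq> {} \<and> connected (R i)) \<longrightarrow>
       (\<forall>i<N. \<forall>(\<alpha>, w)\<in>R i. fx \<alpha> w = c i) \<longrightarrow>
       (\<exists>(t::nat) (a :: nat \<Rightarrow> real).
          real t \<le> C * real N \<and>
          a 0 = amin \<and> a t = amax \<and>
          (\<forall>j<t. a j < a (Suc j)) \<and>
          (\<forall>j<t. \<exists>v. \<forall>\<alpha>\<in>{a j<..<a (Suc j)}.
               dual_utility fx (param_domain d wmin wmax) \<alpha> = v)))"
proof (rule exI[of _ 3], intro conjI allI impI)
  show "(0::real) < 3" by simp
  fix d amin amax wmin wmax H N c
  fix fx :: "real \<Rightarrow> (nat \<Rightarrow> real) \<Rightarrow> real"
  fix R :: "nat \<Rightarrow> (real \<times> (nat \<Rightarrow> real)) set"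
  assume "amin \<le> amax" "wmin \<le> wmax"
    and cover: "(\<Union>i<N. R i) = {amin..amax} \<times> param_domain d wmin wmax"
    and regions: "\<forall>i<N. R i \<noteq> {} \<and> connected (R i)"
    and const: "\<forall>i<N. \<forall>(\<alpha>, w)\<in>R i. fx \<alpha> w = c i"
  have "\<forall>i<N. connected (R i)" using regions by blast
  then obtain t a where "t \<le> 2 * N + 1" and a: "a 0 = amin" "a t = amax" "\<forall>j<t. a j < a (Suc j)"
    "\<forall>j<t. \<exists>v. \<forall>\<alpha>\<in>{a j<..<a (Suc j)}. dual_utility fx (param_domain d wmin wmax) \<alpha> = v"
    by (rule dual_utility_piecewise_constant[where fx = fx, OF \<open>amin \<le> amax\<close> cover _ const])
  have "N \<noteq> 0"
  proof
    assume "N = 0"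
    with cover have "{amin..amax} \<times> param_domain d wmin wmax = {}" by simp
    with \<open>amin \<le> amax\<close> param_domain_nonempty[OF \<open>wmin \<le> wmax\<close>] show False by simp
  qed
  then have "t \<le> 3 * N" using \<open>t \<le> 2 * N + 1\<close> by linarith
  then show "\<exists>t a. real t \<le> 3 * real N \<and> a 0 = amin \<and> a t = amax \<and> (\<forall>j<t. a j < a (Suc j)) \<and>
      (\<forall>j<t. \<exists>v. \<forall>\<alpha>\<in>{a j<..<a (Suc j)}. dual_utility fx (param_domain d wmin wmax) \<alpha> = v)"
    using a by (intro exI[of _ t] exI[of _ a]) simp
qed

end
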